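(* Let $A$ be any $\mathcal L_{\mathrm R}$-sentence with $\mathsf{CR}^{+}\vdash A$. Then for every pole $\perp\!\!\!\perp$, the structure $\langle\mathbb N,\perp\!\!\!\perp,\mathbb T_{\perp\!\!\!\perp},\mathbb F_{\perp\!\!\!\perp}\rangle$ satisfies $A$.
   Context: $\mathcal{L}$ is the language of $\mathsf{PA}$ ($\to,\forall,=$, constant $0$, function symbols for all primitive recursive functions); $\langle x,y\rangle$ primitive recursive pairing with projections $(\cdot)_0,(\cdot)_1$; $e\cdot m\simeq n$ means the $e$-th partial recursive function on input $m$ halts with output $n$ (formalised by a $\Sigma^0_1$ formula $x\cdot y\simeq z$); $\mathrm{Eq}(y,z)$: $y,z$ code closed $\mathcal L$-terms of equal value. $\forall\ulcorner A\urcorner\in\mathrm{Sent}_{\mathcal L}$, $\forall\ulcorner s\urcorner$, $\forall\ulcorner A_x\urcorner\in\mathrm{Sent}_{\mathcal L}$ quantify over codes of $\mathcal L$-sentences, closed terms, and formulas with at most $x$ free; $\ulcorner A(\dot y)\urcorner$ codes $A$ with the numeral of $y$ substituted. A pole is a set $\perp\!\!\!\perp\subseteq\mathbb N$ such that $e\cdot m\simeq n$ and $n\in\perp\!\!\!\perp$ imply $\langle e,m\rangle\in\perp\!\!\!\perp$. For $\mathcal L$-sentences: $\|s=t\|_{\perp\!\!\!\perp}=\mathbb N$ if $s=t$ is false in $\mathbb N$ and $=\perp\!\!\!\perp$ otherwise; $\|A\to B\|=\{n:(n)_0\in|A|,(n)_1\in\|B\|\}$; $\|\forall xA\|=\{n:(n)_1\in\|A(\overline{(n)_0})\|\}$;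 $|A|=\{n:\forall m\in\|A\|\ \langle n,m\rangle\in\perp\!\!\!\perp\}$. $\mathbb T_{\perp\!\!\!\perp}=\{(n,\ulcorner A\urcorner):n\in|A|_{\perp\!\!\!\perp}\}$, $\mathbb F_{\perp\!\!\!\perp}=\{(n,\ulcorner A\urcorner):n\in\|A\|_{\perp\!\!\!\perp}\}$ ($A$ ranging over $\mathcal L$-sentences); these interpret $T$, $F$ and $\perp\!\!\!\perp$ interprets $x\in{\perp\!\!\!\perp}$. $\mathcal L_{\mathrm R}$ extends $\mathcal L$ by unary $x\in{\perp\!\!\!\perp}$ and binary $x\,F\,y$, $x\,T\,y$. $\mathsf{CR}$ is $\mathsf{PA}$ in $\mathcal L_{\mathrm R}$ plus universal closures of: $x\cdot y\simeq z\to(z\in{\perp\!\!\!\perp}\to\langle x,y\rangle\in{\perp\!\!\!\perp})$; $\forall\ulcorner A\urcorner\in\mathrm{Sent}_{\mathcal L}.\ a\,T\,\ulcorner A\urcorner\leftrightarrow\forall b(b\,F\,\ulcorner A\urcorner\to\langle a,b\rangle\in{\perp\!\!\!\perp})$; $\forall\ulcorner s\urcorner,\ulcorner t\urcorner.\ a\,F\,\ulcorner s=t\urcorner\leftrightarrow(\mathrm{Eq}(\ulcorner s\urcorner,\ulcorner t\urcorner)\to a\in{\perp\!\!\!\perp})$; $\forall\ulcorner A\urcorner,\ulcorner B\urcorner\in\mathrm{Sent}_{\mathcal L}.\ a\,F\,\ulcorner A\to B\urcorner\leftrightarrow((a)_0\,T\,\ulcorner A\urcorner\wedge(a)_1\,F\,\ulcorner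 B\urcorner)$; $\forall\ulcorner A_x\urcorner\in\mathrm{Sent}_{\mathcal L}.\ a\,F\,\ulcorner\forall xA\urcorner\leftrightarrow(a)_1\,F\,\ulcorner A((\dot a)_0)\urcorner$. $\mathsf{CR}^{+}$ is $\mathsf{CR}$ plus the rule: from $s\,T\,\ulcorner A\urcorner$ infer $A$, for every closed term $s$ and $\mathcal L$-sentence $A$. *)

theory Defs
  imports Main "HOL-Library.Nat_Bijection"
begin

definition pair :: "nat \<Rightarrow> nat \<Rightarrow> nat" where
  "pair x y = prod_encode (x, y)"

definition proj0 :: "nat \<Rightarrow> nat" where
  "proj0 n = fst (prod_decode n)"

definition proj1 :: "nat \<Rightarrow> nat" where
  "proj1 n = snd (prod_decode n)"

datatype recf = RZ | RS | RP nat | RC recf "recf list" | RR recf recf | RM recf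

inductive reval :: "recf \<Rightarrow> nat list \<Rightarrow> nat \<Rightarrow> bool" where
  rZ: "reval RZ xs 0"
| rS: "xs \<noteq> [] \<Longrightarrow> reval RS xs (Suc (hd xs))"
| rP: "i < length xs \<Longrightarrow> reval (RP i) xs (xs ! i)"
| rC: "length ys = length gs \<Longrightarrow> (\<forall>i<length gs. reval (gs ! i) xs (ys ! i))
        \<Longrightarrow> reval f ys z \<Longrightarrow> reval (RC f gs) xs z"
| rR0: "reval f xs z \<Longrightarrow> reval (RR f g) (0 # xs) z"
| rRS: "reval (RR f g) (y # xs) r \<Longrightarrow> reval g (y # r # xs) z
        \<Longrightarrow> reval (RR f g) (Suc y # xs) z"
| rM: "reval f (y # xs) 0 \<Longrightarrow> (\<forall>k<y. \<exists>v. 0 < v \<and> reval f (k # xs) v)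
        \<Longrightarrow> reval (RM f) xs y"

fun rcode :: "recf \<Rightarrow> nat" where
  "rcode RZ = pair 0 0"
| "rcode RS = pair 1 0"
| "rcode (RP i) = pair 2 i"
| "rcode (RC f gs) = pair 3 (pair (rcode f) (list_encode (map rcode gs)))"
| "rcode (RR f g) = pair 4 (pair (rcode f) (rcode g))"
| "rcode (RM f) = pair 5 (rcode f)"

definition rdecode :: "nat \<Rightarrow> recf" where
  "rdecode e = (if \<exists>f. rcode f = e then (THE f. rcode f = e) else RZ)"

definition kapp :: "nat \<Rightarrow> nat \<Rightarrow> nat \<Rightarrow> bool" where
  "kapp e m n \<longleftrightarrow> reval (rdecode e) [m] n"

datatype prfn = PZero | PSucc | PProj nat nat | PComp nat prfn "prfn list" | PRec nat prfn prfn

fun arity :: "prfn \<Rightarrow> nat" where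
  "arity PZero = 0"
| "arity PSucc = 1"
| "arity (PProj n i) = n"
| "arity (PComp n f gs) = n"
| "arity (PRec n f g) = Suc n"

fun wfp :: "prfn \<Rightarrow> bool" where
  "wfp PZero = True"
| "wfp PSucc = True"
| "wfp (PProj n i) = (i < n)"
| "wfp (PComp n f gs) = (wfp f \<and> arity f = length gs \<and> (\<forall>g\<in>set gs. wfp g \<and> arity g = n))"
| "wfp (PRec n f g) = (wfp f \<and> wfp g \<and> arity f = n \<and> arity g = Suc (Suc n))"

fun evalp :: "prfn \<Rightarrow> nat list \<Rightarrow> nat" where
  "evalp PZero xs = 0"
| "evalp PSucc xs = Suc (hd xs)"
| "evalp (PProj n i) xs = xs ! i"
| "evalp (PComp n f gs) xs = evalp f (map (\<lambda>g. evalp g xs) gs)"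
| "evalp (PRec n f g) xs =
     rec_nat (evalp f (tl xs)) (\<lambda>y r. evalp g (y # r # tl xs)) (hd xs)"

datatype trm = Var nat | Fn prfn "trm list"

datatype fm = Eqf trm trm | Imp fm fm | All fm
  | InPole trm
  | Fr trm trm
  | Tr trm trm

definition zero :: trm where "zero = Fn PZero []"
definition suc :: "trm \<Rightarrow> trm" where "suc t = Fn PSucc [t]"

fun num :: "nat \<Rightarrow> trm" where
  "num 0 = zero"
| "num (Suc n) = suc (num n)"

fun wft :: "trm \<Rightarrow> bool" where
  "wft (Var n) = True"
| "wft (Fn f ts) = (wfp f \<and> arity f = length ts \<and> (\<forall>t\<in>set ts. wft t))"

fun wff :: "fm \<Rightarrow> bool" where
  "wff (Eqf s t) = (wft s \<and> wft t)"
| "wff (Imp A B) = (wff A \<and> wff B)"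
| "wff (All A) = wff A"
| "wff (InPole t) = wft t"
| "wff (Fr s t) = (wft s \<and> wft t)"
| "wff (Tr s t) = (wft s \<and> wft t)"

fun isL :: "fm \<Rightarrow> bool" where
  "isL (Eqf s t) = True"
| "isL (Imp A B) = (isL A \<and> isL B)"
| "isL (All A) = isL A"
| "isL (InPole t) = False"
| "isL (Fr s t) = False"
| "isL (Tr s t) = False"

fun closed_t :: "nat \<Rightarrow> trm \<Rightarrow> bool" where
  "closed_t k (Var n) = (n < k)"
| "closed_t k (Fn f ts) = (\<forall>t\<in>set ts. closed_t k t)"

fun closed_f :: "nat \<Rightarrow> fm \<Rightarrow> bool" where
  "closed_f k (Eqf s t) = (closed_t k s \<and> closed_t k t)"
| "closed_f k (Imp A B) = (closed_f k A \<and> closed_f k B)"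
| "closed_f k (All A) = closed_f (Suc k) A"
| "closed_f k (InPole t) = closed_t k t"
| "closed_f k (Fr s t) = (closed_t k s \<and> closed_t k t)"
| "closed_f k (Tr s t) = (closed_t k s \<and> closed_t k t)"

definition sentence :: "fm \<Rightarrow> bool" where
  "sentence A \<longleftrightarrow> wff A \<and> closed_f 0 A"

definition L_sentence :: "fm \<Rightarrow> bool" where
  "L_sentence A \<longleftrightarrow> sentence A \<and> isL A"

definition closed_L_term :: "trm \<Rightarrow> bool" where
  "closed_L_term t \<longleftrightarrow> wft t \<and> closed_t 0 t"

definition L_formula1 :: "fm \<Rightarrow> bool" where
  "L_formula1 A \<longleftrightarrow> wff A \<and> isL A \<and> closed_f 1 A"

fun subst_t :: "(nat \<Rightarrow> trm) \<Rightarrow> trm \<Rightarrow> trm" where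
  "subst_t \<sigma> (Var n) = \<sigma> n"
| "subst_t \<sigma> (Fn f ts) = Fn f (map (subst_t \<sigma>) ts)"

definition lift_t :: "trm \<Rightarrow> trm" where
  "lift_t t = subst_t (\<lambda>n. Var (Suc n)) t"

definition up :: "(nat \<Rightarrow> trm) \<Rightarrow> nat \<Rightarrow> trm" where
  "up \<sigma> n = (case n of 0 \<Rightarrow> Var 0 | Suc k \<Rightarrow> lift_t (\<sigma> k))"

fun subst :: "(nat \<Rightarrow> trm) \<Rightarrow> fm \<Rightarrow> fm" where
  "subst \<sigma> (Eqf s t) = Eqf (subst_t \<sigma> s) (subst_t \<sigma> t)"
| "subst \<sigma> (Imp A B) = Imp (subst \<sigma> A) (subst \<sigma> B)"
| "subst \<sigma> (All A) = All (subst (up \<sigma>) A)"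
| "subst \<sigma> (InPole t) = InPole (subst_t \<sigma> t)"
| "subst \<sigma> (Fr s t) = Fr (subst_t \<sigma> s) (subst_t \<sigma> t)"
| "subst \<sigma> (Tr s t) = Tr (subst_t \<sigma> s) (subst_t \<sigma> t)"

definition lift :: "fm \<Rightarrow> fm" where
  "lift A = subst (\<lambda>n. Var (Suc n)) A"

definition inst :: "trm \<Rightarrow> nat \<Rightarrow> trm" where
  "inst t n = (case n of 0 \<Rightarrow> t | Suc k \<Rightarrow> Var k)"

definition at1 :: "fm \<Rightarrow> trm \<Rightarrow> fm" where
  "at1 A t = subst (inst t) A"

definition at2 :: "fm \<Rightarrow> trm \<Rightarrow> trm \<Rightarrow> fm" where
  "at2 A s t = subst (\<lambda>n. if n = 0 then s else if n = 1 then t else Var n) A"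

definition at3 :: "fm \<Rightarrow> trm \<Rightarrow> trm \<Rightarrow> trm \<Rightarrow> fm" where
  "at3 A r s t = subst (\<lambda>n. if n = 0 then r else if n = 1 then s else if n = 2 then t else Var n) A"

definition Bot :: fm where "Bot = Eqf zero (suc zero)"
definition Neg :: "fm \<Rightarrow> fm" where "Neg A = Imp A Bot"
definition Conj :: "fm \<Rightarrow> fm \<Rightarrow> fm" where "Conj A B = Neg (Imp A (Neg B))"
definition Iff :: "fm \<Rightarrow> fm \<Rightarrow> fm" where "Iff A B = Conj (Imp A B) (Imp B A)"

fun pcode :: "prfn \<Rightarrow> nat" where
  "pcode PZero = pair 0 0"
| "pcode PSucc = pair 1 0"
| "pcode (PProj n i) = pair 2 (pair n i)"
| "pcode (PComp n f gs) = pair 3 (pair n (pair (pcode f) (list_encode (map pcode gs))))"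
| "pcode (PRec n f g) = pair 4 (pair n (pair (pcode f) (pcode g)))"

fun tcode :: "trm \<Rightarrow> nat" where
  "tcode (Var n) = pair 0 n"
| "tcode (Fn f ts) = pair 1 (pair (pcode f) (list_encode (map tcode ts)))"

fun fcode :: "fm \<Rightarrow> nat" where
  "fcode (Eqf s t) = pair 0 (pair (tcode s) (tcode t))"
| "fcode (Imp A B) = pair 1 (pair (fcode A) (fcode B))"
| "fcode (All A) = pair 2 (fcode A)"
| "fcode (InPole t) = pair 3 (tcode t)"
| "fcode (Fr s t) = pair 4 (pair (tcode s) (tcode t))"
| "fcode (Tr s t) = pair 5 (pair (tcode s) (tcode t))"

fun evalt :: "(nat \<Rightarrow> nat) \<Rightarrow> trm \<Rightarrow> nat" where
  "evalt e (Var n) = e n"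
| "evalt e (Fn f ts) = evalp f (map (evalt e) ts)"

fun sat :: "nat set \<Rightarrow> (nat \<times> nat) set \<Rightarrow> (nat \<times> nat) set \<Rightarrow> (nat \<Rightarrow> nat) \<Rightarrow> fm \<Rightarrow> bool" where
  "sat P T F e (Eqf s t) = (evalt e s = evalt e t)"
| "sat P T F e (Imp A B) = (sat P T F e A \<longrightarrow> sat P T F e B)"
| "sat P T F e (All A) = (\<forall>n. sat P T F (case_nat n e) A)"
| "sat P T F e (InPole t) = (evalt e t \<in> P)"
| "sat P T F e (Fr s t) = ((evalt e s, evalt e t) \<in> F)"
| "sat P T F e (Tr s t) = ((evalt e s, evalt e t) \<in> T)"

definition satN :: "(nat \<Rightarrow> nat) \<Rightarrow> fm \<Rightarrow> bool" where
  "satN e A = sat {} {} {} e A"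

definition is_pole :: "nat set \<Rightarrow> bool" where
  "is_pole P \<longleftrightarrow> (\<forall>e m n. kapp e m n \<longrightarrow> n \<in> P \<longrightarrow> pair e m \<in> P)"

text \<open>Falsity value \<open>\<parallel>A\<parallel>\<close> and truth value \<open>|A|\<close> of L-formulas relative to an environment;
  for a sentence the environment is irrelevant and \<open>\<parallel>\<forall>x A\<parallel>\<close> unfolds to
  \<open>{n. (n)\<^sub>1 \<in> \<parallel>A((n)\<^sub>0)\<parallel>}\<close>.\<close>
fun fval :: "nat set \<Rightarrow> (nat \<Rightarrow> nat) \<Rightarrow> fm \<Rightarrow> nat set"
and tval :: "nat set \<Rightarrow> (nat \<Rightarrow> nat) \<Rightarrow> fm \<Rightarrow> nat set" where
  "fval P e (Eqf s t) = (if evalt e s = evalt e t then P else UNIV)"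
| "fval P e (Imp A B) = {n. proj0 n \<in> tval P e A \<and> proj1 n \<in> fval P e B}"
| "fval P e (All A) = {n. proj1 n \<in> fval P (case_nat (proj0 n) e) A}"
| "fval P e (InPole t) = {}"
| "fval P e (Fr s t) = {}"
| "fval P e (Tr s t) = {}"
| "tval P e A = {n. \<forall>m\<in>fval P e A. pair n m \<in> P}"

definition TT :: "nat set \<Rightarrow> (nat \<times> nat) set" where
  "TT P = {(n, fcode A) | n A. L_sentence A \<and> n \<in> tval P (\<lambda>_. 0) A}"

definition FF :: "nat set \<Rightarrow> (nat \<times> nat) set" where
  "FF P = {(n, fcode A) | n A. L_sentence A \<and> n \<in> fval P (\<lambda>_. 0) A}"

text \<open>Formalisation parameters: function symbols for pairing, projections and the
  syntactic operations on codes, and L-formulas expressing the syntactic predicates,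
  \<open>Eq\<close> and Kleene application.\<close>
record crpar =
  pPair :: prfn  pP0 :: prfn  pP1 :: prfn
  pEq :: prfn  pImp :: prfn  pAll :: prfn  pSub :: prfn
  SentF :: fm  TermF :: fm  Fm1F :: fm  EqF :: fm  KlF :: fm

definition fn_ok :: "prfn \<Rightarrow> nat \<Rightarrow> bool" where
  "fn_ok p k \<longleftrightarrow> wfp p \<and> arity p = k"

definition defines1 :: "fm \<Rightarrow> (nat \<Rightarrow> bool) \<Rightarrow> bool" where
  "defines1 A R \<longleftrightarrow> wff A \<and> isL A \<and> closed_f 1 A \<and> (\<forall>e. satN e A \<longleftrightarrow> R (e 0))"

definition defines2 :: "fm \<Rightarrow> (nat \<Rightarrow> nat \<Rightarrow> bool) \<Rightarrow> bool" where
  "defines2 A R \<longleftrightarrow> wff A \<and> isL A \<and> closed_f 2 A \<and> (\<forall>e. satN e A \<longleftrightarrow> R (e 0) (e 1))"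

definition defines3 :: "fm \<Rightarrow> (nat \<Rightarrow> nat \<Rightarrow> nat \<Rightarrow> bool) \<Rightarrow> bool" where
  "defines3 A R \<longleftrightarrow> wff A \<and> isL A \<and> closed_f 3 A \<and> (\<forall>e. satN e A \<longleftrightarrow> R (e 0) (e 1) (e 2))"

definition Ex :: "fm \<Rightarrow> fm" where "Ex A = Neg (All (Neg A))"

inductive is_Sigma1 :: "fm \<Rightarrow> bool" where
  "is_Sigma1 (Eqf s t)"
| "is_Sigma1 A \<Longrightarrow> is_Sigma1 (Ex A)"

definition crpar_ok :: "crpar \<Rightarrow> bool" where
  "crpar_ok c \<longleftrightarrow>
     fn_ok (pPair c) 2 \<and> (\<forall>x y. evalp (pPair c) [x, y] = pair x y) \<and>
     fn_ok (pP0 c) 1 \<and> (\<forall>x. evalp (pP0 c) [x] = proj0 x) \<and>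
     fn_ok (pP1 c) 1 \<and> (\<forall>x. evalp (pP1 c) [x] = proj1 x) \<and>
     fn_ok (pEq c) 2 \<and> (\<forall>x y. evalp (pEq c) [x, y] = pair 0 (pair x y)) \<and>
     fn_ok (pImp c) 2 \<and> (\<forall>x y. evalp (pImp c) [x, y] = pair 1 (pair x y)) \<and>
     fn_ok (pAll c) 1 \<and> (\<forall>x. evalp (pAll c) [x] = pair 2 x) \<and>
     fn_ok (pSub c) 2 \<and>
       (\<forall>A n. L_formula1 A \<longrightarrow> evalp (pSub c) [fcode A, n] = fcode (subst (inst (num n)) A)) \<and>
     defines1 (SentF c) (\<lambda>x. \<exists>A. L_sentence A \<and> x = fcode A) \<and>
     defines1 (TermF c) (\<lambda>x. \<exists>t. closed_L_term t \<and> x = tcode t) \<and>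
     defines1 (Fm1F c) (\<lambda>x. \<exists>A. L_formula1 A \<and> x = fcode A) \<and>
     defines2 (EqF c) (\<lambda>y z. \<exists>s t. closed_L_term s \<and> closed_L_term t \<and> y = tcode s \<and> z = tcode t
                              \<and> evalt (\<lambda>_. 0) s = evalt (\<lambda>_. 0) t) \<and>
     defines3 (KlF c) kapp \<and> is_Sigma1 (KlF c)"

definition vs :: "nat \<Rightarrow> trm list" where
  "vs n = map Var [0..<n]"

inductive pa_ax :: "fm \<Rightarrow> bool" where
  "pa_ax (Neg (Eqf (suc (Var 0)) zero))"
| "pa_ax (Imp (Eqf (suc (Var 0)) (suc (Var 1))) (Eqf (Var 0) (Var 1)))"
| "wfp (PProj n i) \<Longrightarrow> pa_ax (Eqf (Fn (PProj n i) (vs n)) (Var i))"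
| "wfp (PComp n f gs) \<Longrightarrow>
     pa_ax (Eqf (Fn (PComp n f gs) (vs n)) (Fn f (map (\<lambda>g. Fn g (vs n)) gs)))"
| "wfp (PRec n f g) \<Longrightarrow> pa_ax (Eqf (Fn (PRec n f g) (zero # vs n)) (Fn f (vs n)))"
| "wfp (PRec n f g) \<Longrightarrow>
     pa_ax (Eqf (Fn (PRec n f g) (suc (Var n) # vs n))
                (Fn g (Var n # Fn (PRec n f g) (Var n # vs n) # vs n)))"
| "wff A \<Longrightarrow>
     pa_ax (Imp (subst (inst zero) A)
             (Imp (All (Imp A (subst (\<lambda>k. if k = 0 then suc (Var 0) else Var k) A)))
                  (All A)))"

text \<open>The axioms of CR (as open formulas; their universal closures follow by generalisation).\<close>
definition cr_axioms :: "crpar \<Rightarrow> fm set" where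
  "cr_axioms c =
   { \<comment> \<open>\<open>x\<cdot>y \<simeq> z \<rightarrow> (z \<in> \<bottom>\<bottom> \<rightarrow> \<langle>x,y\<rangle> \<in> \<bottom>\<bottom>)\<close>; x = 0, y = 1, z = 2\<close>
     Imp (at3 (KlF c) (Var 0) (Var 1) (Var 2))
         (Imp (InPole (Var 2)) (InPole (Fn (pPair c) [Var 0, Var 1]))),
     \<comment> \<open>T-axiom; code = 0, a = 1\<close>
     Imp (at1 (SentF c) (Var 0))
         (Iff (Tr (Var 1) (Var 0))
              (All (Imp (Fr (Var 0) (Var 1)) (InPole (Fn (pPair c) [Var 2, Var 0]))))),
     \<comment> \<open>F-axiom for equations; s = 0, t = 1, a = 2\<close>
     Imp (at1 (TermF c) (Var 0)) (Imp (at1 (TermF c) (Var 1))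
         (Iff (Fr (Var 2) (Fn (pEq c) [Var 0, Var 1]))
              (Imp (at2 (EqF c) (Var 0) (Var 1)) (InPole (Var 2))))),
     \<comment> \<open>F-axiom for implication; A = 0, B = 1, a = 2\<close>
     Imp (at1 (SentF c) (Var 0)) (Imp (at1 (SentF c) (Var 1))
         (Iff (Fr (Var 2) (Fn (pImp c) [Var 0, Var 1]))
              (Conj (Tr (Fn (pP0 c) [Var 2]) (Var 0)) (Fr (Fn (pP1 c) [Var 2]) (Var 1))))),
     \<comment> \<open>F-axiom for the universal quantifier; A = 0, a = 1\<close>
     Imp (at1 (Fm1F c) (Var 0))
         (Iff (Fr (Var 1) (Fn (pAll c) [Var 0]))
              (Fr (Fn (pP1 c) [Var 1]) (Fn (pSub c) [Var 0, Fn (pP0 c) [Var 1]]))) }"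

inductive CRplus_prv :: "crpar \<Rightarrow> fm \<Rightarrow> bool" for c :: crpar where
  axK: "wff A \<Longrightarrow> wff B \<Longrightarrow> CRplus_prv c (Imp A (Imp B A))"
| axS: "wff A \<Longrightarrow> wff B \<Longrightarrow> wff C \<Longrightarrow>
        CRplus_prv c (Imp (Imp A (Imp B C)) (Imp (Imp A B) (Imp A C)))"
| axDNE: "wff A \<Longrightarrow> CRplus_prv c (Imp (Neg (Neg A)) A)"
| axInst: "wff A \<Longrightarrow> wft t \<Longrightarrow> CRplus_prv c (Imp (All A) (subst (inst t) A))"
| axVac: "wff A \<Longrightarrow> CRplus_prv c (Imp A (All (lift A)))"
| axDist: "wff A \<Longrightarrow> wff B \<Longrightarrow> CRplus_prv c (Imp (All (Imp A B)) (Imp (All A) (All B)))"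
| axRefl: "wft t \<Longrightarrow> CRplus_prv c (Eqf t t)"
| axLeib: "wft s \<Longrightarrow> wft t \<Longrightarrow> wff A \<Longrightarrow>
        CRplus_prv c (Imp (Eqf s t) (Imp (subst (inst s) A) (subst (inst t) A)))"
| axPA: "pa_ax A \<Longrightarrow> CRplus_prv c A"
| axCR: "A \<in> cr_axioms c \<Longrightarrow> CRplus_prv c A"
| MP: "CRplus_prv c (Imp A B) \<Longrightarrow> CRplus_prv c A \<Longrightarrow> CRplus_prv c B"
| Gen: "CRplus_prv c A \<Longrightarrow> CRplus_prv c (All A)"
| Refl: "closed_L_term s \<Longrightarrow> L_sentence A \<Longrightarrow> CRplus_prv c (Tr s (num (fcode A)))
        \<Longrightarrow> CRplus_prv c A"

end

theory Submission
  imports Defs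
begin

text \<open>Soundness is proved by induction on derivations, for all poles at once.  The CR axioms
  hold under every pole because the T- and F-axioms are just the defining clauses of \<open>|A|\<close> and
  \<open>\<parallel>A\<parallel>\<close> read through the Goedel coding.  For the reflection rule the induction hypothesis is
  used at the empty pole: there \<open>\<parallel>A\<parallel>\<close> is empty if \<open>A\<close> is true and everything if \<open>A\<close> is false,
  so \<open>|A|\<close> is inhabited only when \<open>A\<close> is true.\<close>

lemma pair_eq_iff [simp]: "pair a b = pair c d \<longleftrightarrow> a = c \<and> b = d"
  by (simp add: pair_def)

lemma proj_pair [simp]: "proj0 (pair a b) = a" "proj1 (pair a b) = b"
  by (simp_all add: pair_def proj0_def proj1_def)

lemma Collect_proj_nonempty_iff:
  "{n. proj0 n \<in> X \<and> proj1 n \<in> Y} \<noteq> {} \<longleftrightarrow> X \<noteq> {} \<and> Y \<noteq> {}"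
  by (auto, metis proj_pair)

lemma Collect_proj_dependent_nonempty_iff:
  "{n. proj1 n \<in> Y (proj0 n)} \<noteq> {} \<longleftrightarrow> (\<exists>k. Y k \<noteq> {})"
  by (auto, metis proj_pair)

lemma map_eq_imp_eq_on_inj:
  "\<forall>x\<in>set xs. \<forall>y. f x = f y \<longrightarrow> x = y \<Longrightarrow> map f xs = map f ys \<Longrightarrow> xs = ys"
  by (induction xs arbitrary: ys) (auto simp: Cons_eq_map_conv)

lemma pcode_inj: "pcode p = pcode q \<Longrightarrow> p = q"
proof (induction p arbitrary: q)
  case (PComp n f gs)
  then show ?case by (cases q) (auto simp: list_encode_eq intro: map_eq_imp_eq_on_inj)
qed (case_tac q; auto)+

lemma tcode_inj: "tcode s = tcode t \<Longrightarrow> s = t"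
proof (induction s arbitrary: t)
  case (Fn f ss)
  then show ?case
    by (cases t) (auto simp: list_encode_eq pcode_inj intro: map_eq_imp_eq_on_inj)
qed (case_tac t; auto)+

lemma fcode_inj: "fcode A = fcode B \<Longrightarrow> A = B"
  by (induction A arbitrary: B; case_tac B; auto dest: tcode_inj)

lemma tcode_eq_iff [simp]: "tcode s = tcode t \<longleftrightarrow> s = t"
  using tcode_inj by blast

lemma evalt_subst_t: "evalt e (subst_t \<sigma> t) = evalt (\<lambda>n. evalt e (\<sigma> n)) t"
  by (induction t) (simp_all cong: map_cong)

lemma evalt_up:
  "(\<lambda>n. evalt (case_nat k e) (up \<sigma> n)) = case_nat k (\<lambda>n. evalt e (\<sigma> n))"
  by (rule ext) (simp add: up_def lift_t_def evalt_subst_t split: nat.split)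

lemma evalt_inst: "(\<lambda>n. evalt e (inst t n)) = case_nat (evalt e t) e"
  by (rule ext) (simp add: inst_def split: nat.split)

lemma sat_subst: "sat P T F e (subst \<sigma> A) \<longleftrightarrow> sat P T F (\<lambda>n. evalt e (\<sigma> n)) A"
  by (induction A arbitrary: e \<sigma>) (simp_all add: evalt_subst_t evalt_up)

lemma fval_subst: "fval P e (subst \<sigma> A) = fval P (\<lambda>n. evalt e (\<sigma> n)) A"
  by (induction A arbitrary: e \<sigma>) (simp_all add: evalt_subst_t evalt_up)

lemma sat_subst_inst: "sat P T F e (subst (inst t) A) \<longleftrightarrow> sat P T F (case_nat (evalt e t) e) A"
  by (simp add: sat_subst evalt_inst)

lemma sat_lift: "sat P T F (case_nat n e) (lift A) \<longleftrightarrow> sat P T F e A"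
  by (simp add: lift_def sat_subst)

lemma sat_isL_iff_satN: "isL A \<Longrightarrow> sat P T F e A \<longleftrightarrow> satN e A"
  unfolding satN_def by (induction A arbitrary: e) auto

lemma evalt_closed_t_cong:
  "closed_t k t \<Longrightarrow> \<forall>n<k. e n = e' n \<Longrightarrow> evalt e t = evalt e' t"
  by (induction t) (auto cong: map_cong)

lemma sat_closed_f_cong:
  "closed_f k A \<Longrightarrow> \<forall>n<k. e n = e' n \<Longrightarrow> sat P T F e A \<longleftrightarrow> sat P T F e' A"
proof (induction A arbitrary: k e e')
  case (All A)
  have "\<forall>n<Suc k. case_nat m e n = case_nat m e' n" for m
    using All.prems(2) by (auto split: nat.split)
  then have "sat P T F (case_nat m e) A \<longleftrightarrow> sat P T F (case_nat m e') A" for m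
    using All.IH All.prems(1) by simp
  then show ?case by simp
next
  case (Imp A B)
  then show ?case using Imp.IH(1)[OF _ Imp.prems(2)] Imp.IH(2)[OF _ Imp.prems(2)] by simp
next
  case (Eqf s t)
  then show ?case using evalt_closed_t_cong[OF _ Eqf.prems(2)] by simp
next
  case (InPole t)
  then show ?case using evalt_closed_t_cong[OF _ InPole.prems(2)] by simp
next
  case (Fr s t)
  then show ?case using evalt_closed_t_cong[OF _ Fr.prems(2)] by simp
next
  case (Tr s t)
  then show ?case using evalt_closed_t_cong[OF _ Tr.prems(2)] by simp
qed

lemma sat_Neg [simp]: "sat P T F e (Neg A) \<longleftrightarrow> \<not> sat P T F e A"
  by (simp add: Neg_def Bot_def zero_def suc_def)

lemma sat_Conj [simp]: "sat P T F e (Conj A B) \<longleftrightarrow> sat P T F e A \<and> sat P T F e B"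
  by (simp add: Conj_def)

lemma sat_Iff [simp]: "sat P T F e (Iff A B) \<longleftrightarrow> (sat P T F e A \<longleftrightarrow> sat P T F e B)"
  by (auto simp: Iff_def)

lemma evalt_num [simp]: "evalt e (num n) = n"
  by (induction n) (auto simp: zero_def suc_def)

lemma wft_num: "wft (num n)"
  by (induction n) (auto simp: zero_def suc_def)

lemma closed_t_num: "closed_t k (num n)"
  by (induction n) (auto simp: zero_def suc_def)

lemma wft_subst_t: "wft t \<Longrightarrow> \<forall>n. wft (\<sigma> n) \<Longrightarrow> wft (subst_t \<sigma> t)"
  by (induction t) auto

lemma wff_subst: "wff A \<Longrightarrow> \<forall>n. wft (\<sigma> n) \<Longrightarrow> wff (subst \<sigma> A)"
proof (induction A arbitrary: \<sigma>)
  case (All A)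
  have "\<forall>n. wft (up \<sigma> n)"
    using All.prems(2) by (auto simp: up_def lift_t_def intro: wft_subst_t split: nat.split)
  then show ?case using All by simp
qed (auto intro: wft_subst_t)

lemma isL_subst: "isL A \<Longrightarrow> isL (subst \<sigma> A)"
  by (induction A arbitrary: \<sigma>) auto

lemma closed_t_subst_t:
  "closed_t k t \<Longrightarrow> \<forall>n<k. closed_t j (\<sigma> n) \<Longrightarrow> closed_t j (subst_t \<sigma> t)"
  by (induction t) auto

lemma closed_f_subst:
  "closed_f k A \<Longrightarrow> \<forall>n<k. closed_t j (\<sigma> n) \<Longrightarrow> closed_f j (subst \<sigma> A)"
proof (induction A arbitrary: \<sigma> k j)
  case (All A)
  have "\<forall>n<Suc k. closed_t (Suc j) (up \<sigma> n)"
    using All.prems(2) by (auto simp: up_def lift_t_def intro!: closed_t_subst_t split: nat.split)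
  then show ?case using All by simp
qed (auto intro: closed_t_subst_t)

lemma L_sentence_Eqf: "closed_L_term s \<Longrightarrow> closed_L_term t \<Longrightarrow> L_sentence (Eqf s t)"
  by (simp add: L_sentence_def sentence_def closed_L_term_def)

lemma L_sentence_Imp: "L_sentence A \<Longrightarrow> L_sentence B \<Longrightarrow> L_sentence (Imp A B)"
  by (simp add: L_sentence_def sentence_def)

lemma L_sentence_All: "L_formula1 A \<Longrightarrow> L_sentence (All A)"
  by (simp add: L_sentence_def sentence_def L_formula1_def)

lemma L_sentence_subst_inst_num: "L_formula1 A \<Longrightarrow> L_sentence (subst (inst (num n)) A)"
  unfolding L_formula1_def L_sentence_def sentence_def
  by (auto intro!: wff_subst isL_subst closed_f_subst
      simp: inst_def wft_num closed_t_num split: nat.split)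

lemma fval_empty_pole_nonempty_iff: "isL A \<Longrightarrow> fval {} e A \<noteq> {} \<longleftrightarrow> \<not> satN e A"
proof (induction A arbitrary: e)
  case (Imp A B)
  then show ?case
    by (simp only: fval.simps isL.simps Collect_proj_nonempty_iff) (simp add: satN_def)
next
  case (All A)
  then show ?case
    using Collect_proj_dependent_nonempty_iff[of "\<lambda>k. fval {} (case_nat k e) A"]
    by (simp add: satN_def)
qed (simp_all add: satN_def)

lemma tval_empty_pole_imp_satN: "isL A \<Longrightarrow> n \<in> tval {} e A \<Longrightarrow> satN e A"
  using fval_empty_pole_nonempty_iff[of A e] by auto

lemma TT_iff: "L_sentence A \<Longrightarrow> (a, fcode A) \<in> TT P \<longleftrightarrow> a \<in> tval P (\<lambda>_. 0) A"
  unfolding TT_def by (auto dest: fcode_inj simp del: tval.simps)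

lemma FF_iff: "L_sentence A \<Longrightarrow> (a, fcode A) \<in> FF P \<longleftrightarrow> a \<in> fval P (\<lambda>_. 0) A"
  unfolding FF_def by (auto dest: fcode_inj)

lemma TT_iff_FF:
  "L_sentence A \<Longrightarrow> (a, fcode A) \<in> TT P \<longleftrightarrow> (\<forall>b. (b, fcode A) \<in> FF P \<longrightarrow> pair a b \<in> P)"
  by (auto simp: TT_iff FF_iff)

lemma FF_Eqf_iff:
  "closed_L_term s \<Longrightarrow> closed_L_term t \<Longrightarrow>
   (a, fcode (Eqf s t)) \<in> FF P \<longleftrightarrow> (evalt (\<lambda>_. 0) s = evalt (\<lambda>_. 0) t \<longrightarrow> a \<in> P)"
  by (simp add: FF_iff L_sentence_Eqf del: fcode.simps)

lemma FF_Imp_iff: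
  "L_sentence A \<Longrightarrow> L_sentence B \<Longrightarrow>
   (a, fcode (Imp A B)) \<in> FF P \<longleftrightarrow> (proj0 a, fcode A) \<in> TT P \<and> (proj1 a, fcode B) \<in> FF P"
  by (simp add: FF_iff TT_iff L_sentence_Imp del: fcode.simps tval.simps)

lemma FF_All_iff:
  "L_formula1 A \<Longrightarrow>
   (a, fcode (All A)) \<in> FF P \<longleftrightarrow> (proj1 a, fcode (subst (inst (num (proj0 a))) A)) \<in> FF P"
  by (simp add: FF_iff L_sentence_All L_sentence_subst_inst_num fval_subst evalt_inst
      del: fcode.simps)

lemma crpar_ok_evalp:
  assumes "crpar_ok c"
  shows "evalp (pPair c) [x, y] = pair x y"
    and "evalp (pP0 c) [x] = proj0 x"
    and "evalp (pP1 c) [x] = proj1 x"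
    and "evalp (pEq c) [x, y] = pair 0 (pair x y)"
    and "evalp (pImp c) [x, y] = pair 1 (pair x y)"
    and "evalp (pAll c) [x] = pair 2 x"
    and "L_formula1 A \<Longrightarrow> evalp (pSub c) [fcode A, x] = fcode (subst (inst (num x)) A)"
  using assms unfolding crpar_ok_def by simp_all

lemma crpar_ok_sat_at:
  assumes "crpar_ok c"
  shows "sat P T F e (at1 (SentF c) t) \<longleftrightarrow> (\<exists>A. L_sentence A \<and> evalt e t = fcode A)"
    and "sat P T F e (at1 (TermF c) t) \<longleftrightarrow> (\<exists>s. closed_L_term s \<and> evalt e t = tcode s)"
    and "sat P T F e (at1 (Fm1F c) t) \<longleftrightarrow> (\<exists>A. L_formula1 A \<and> evalt e t = fcode A)"
    and "sat P T F e (at2 (EqF c) s t) \<longleftrightarrow>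
      (\<exists>s' t'. closed_L_term s' \<and> closed_L_term t' \<and> evalt e s = tcode s' \<and> evalt e t = tcode t'
        \<and> evalt (\<lambda>_. 0) s' = evalt (\<lambda>_. 0) t')"
    and "sat P T F e (at3 (KlF c) r s t) \<longleftrightarrow> kapp (evalt e r) (evalt e s) (evalt e t)"
  using assms
  unfolding crpar_ok_def defines1_def defines2_def defines3_def at1_def at2_def at3_def
  by (simp_all add: sat_subst sat_subst_inst sat_isL_iff_satN inst_def)

lemma cr_axioms_sound:
  assumes ok: "crpar_ok c" and pole: "is_pole P" and ax: "A \<in> cr_axioms c"
  shows "sat P (TT P) (FF P) e A"
proof -
  note [simp] = crpar_ok_evalp[OF ok] crpar_ok_sat_at[OF ok]
  from ax show ?thesis
    unfolding cr_axioms_def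
    apply (elim insertE emptyE)
    subgoal using pole by (simp add: is_pole_def)
    subgoal by (auto simp: TT_iff_FF)
    subgoal by (auto simp: FF_Eqf_iff[simplified])
    subgoal by (auto simp: FF_Imp_iff[simplified])
    subgoal by (auto simp: FF_All_iff[simplified])
    done
qed

lemma sat_induction_axiom:
  "sat P T F e (Imp (subst (inst zero) A)
     (Imp (All (Imp A (subst (\<lambda>k. if k = 0 then suc (Var 0) else Var k) A))) (All A)))"
proof -
  have step_env:
    "(\<lambda>k. evalt (case_nat m e) (if k = 0 then suc (Var 0) else Var k)) = case_nat (Suc m) e" for m
    by (rule ext) (simp add: suc_def split: nat.split)
  have induct: "sat P T F (case_nat n e) A"
    if "sat P T F (case_nat 0 e) A"
      and "\<And>m. sat P T F (case_nat m e) A \<Longrightarrow> sat P T F (case_nat (Suc m) e) A" for n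
    by (induction n) (simp_all add: that)
  show ?thesis
    unfolding sat.simps sat_subst_inst unfolding sat_subst step_env
    by (auto simp: zero_def intro: induct)
qed

lemma pa_ax_sound: "pa_ax A \<Longrightarrow> sat P T F e A"
proof (induction rule: pa_ax.induct)
  case (7 A)
  show ?case by (rule sat_induction_axiom)
qed (auto simp: zero_def suc_def vs_def comp_def)

lemma sat_L_sentence_iff_satN:
  assumes "L_sentence A"
  shows "sat P T F e A \<longleftrightarrow> satN (\<lambda>_. 0) A"
proof -
  have "isL A" "closed_f 0 A" using assms by (simp_all add: L_sentence_def sentence_def)
  from \<open>isL A\<close> have "sat P T F e A \<longleftrightarrow> satN e A" by (rule sat_isL_iff_satN)
  also have "\<dots> \<longleftrightarrow> satN (\<lambda>_. 0) A"
    unfolding satN_def using \<open>closed_f 0 A\<close> by (rule sat_closed_f_cong) simp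
  finally show ?thesis .
qed

lemma CRplus_prv_sound:
  "CRplus_prv c A \<Longrightarrow> crpar_ok c \<Longrightarrow> is_pole P \<Longrightarrow> sat P (TT P) (FF P) e A"
proof (induction A arbitrary: P e rule: CRplus_prv.induct)
  case (Refl s A)
  have "(evalt (\<lambda>_. 0) s, fcode A) \<in> TT {}"
    using Refl.IH[of "{}" "\<lambda>_. 0"] Refl.prems(1) by (simp add: is_pole_def)
  then have "satN (\<lambda>_. 0) A"
    using Refl.hyps(2) tval_empty_pole_imp_satN
    by (simp add: TT_iff L_sentence_def del: tval.simps)
  then show ?case using Refl.hyps(2) by (simp add: sat_L_sentence_iff_satN)
qed (auto simp: sat_subst_inst sat_lift pa_ax_sound cr_axioms_sound)

theorem proposition5:
  fixes c :: crpar and A :: fm and P :: "nat set"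
  assumes "crpar_ok c"
    and "sentence A"
    and "CRplus_prv c A"
    and "is_pole P"
  shows "sat P (TT P) (FF P) (\<lambda>_. 0) A"
  \<comment> \<open>Soundness holds in every environment.\<close>
  using CRplus_prv_sound assms(1,3,4) by blast

end
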